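(* Fix an integer $n\ge 3$ and $p\in(0,1)$, and define for $x\in[2,n-1]$ \[ \varphi(x)=\Bigl(\Bigl(\tfrac{n}{n-1}\Bigr)^p-1\Bigr)^{1/(1-p)}(n-x)+\Bigl(\Bigl(\tfrac{n}{n-1}\Bigr)^p(x-1)-x+2\Bigr)^{1/(1-p)}(n-x+2)^{-p/(1-p)}. \] Then $\varphi$ is convex on $[2,n-1]$ and $\varphi(x)\le 1$ for all $x\in[2,n-1]$. *)

theory Defs
  imports "HOL-Analysis.Analysis"
begin

definition phi :: "nat \<Rightarrow> real \<Rightarrow> real \<Rightarrow> real" where
  "phi n p x =
     ((real n / (real n - 1)) powr p - 1) powr (1 / (1 - p)) * (real n - x)
   + ((real n / (real n - 1)) powr p * (x - 1) - x + 2) powr (1 / (1 - p))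
     * (real n - x + 2) powr (- p / (1 - p))"

end

theory Submission
  imports Defs
begin

text \<open>With \<open>c = (n / (n - 1)) powr p - 1\<close> and \<open>q = 1 / (1 - p)\<close> one has
  \<open>phi x = c powr q * (n - x) + (c * (x - 1) + 1) powr q * (n - x + 2) powr (1 - q)\<close>.
  The second summand is the perspective \<open>v * (u / v) powr q\<close> of the convex function
  \<open>u powr q\<close>, taken along an affine path \<open>x \<mapsto> (u, v)\<close>, so \<open>phi\<close> is convex and it
  suffices to bound it at the endpoints \<open>2\<close> and \<open>n - 1\<close>. Both bounds start from
  Bernoulli's inequality \<open>c \<le> p / (n - 1)\<close>. At \<open>x = 2\<close> the claim then reduces to
  \<open>(n - 1) powr (q - 1) \<ge> 1 + p * (1 - 1 / (n - 1))\<close>; at \<open>x = n - 1\<close> superadditivity of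
  \<open>t powr q\<close> reduces it to \<open>c + (c * (n - 2) + 1) / 3 powr p \<le> 1\<close>, which follows from
  \<open>3 powr p \<ge> 1 + p + p\<^sup>2 / 2\<close>.\<close>

lemma powr_le_one_plus_mult:
  fixes x p :: real
  assumes "0 \<le> p" "p \<le> 1" "0 \<le> x"
  shows "(1 + x) powr p \<le> 1 + p * x"
proof -
  have "exp ((1 - p) * 0 + p * ln (1 + x)) \<le> (1 - p) * exp 0 + p * exp (ln (1 + x))"
    using convex_onD[OF exp_convex, of p 0 "ln (1 + x)"] assms by simp
  then show ?thesis
    using assms by (simp add: powr_def algebra_simps)
qed

lemma one_plus_mult_le_powr:
  fixes x r :: real
  assumes "0 < x" "0 \<le> r"
  shows "1 + r * (1 - 1 / x) \<le> x powr r"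
proof -
  have "1 - 1 / x \<le> ln x"
    using ln_le_minus_one[of "1 / x"] assms by (simp add: ln_div)
  then have "1 + r * (1 - 1 / x) \<le> 1 + r * ln x"
    using assms by (simp add: mult_left_mono)
  also have "\<dots> \<le> exp (r * ln x)"
    by (rule exp_ge_add_one_self)
  finally show ?thesis
    using assms by (simp add: powr_def)
qed

lemma powr_add_le_powr_add:
  fixes a b q :: real
  assumes "1 \<le> q" "0 \<le> a" "0 \<le> b"
  shows "a powr q + b powr q \<le> (a + b) powr q"
proof (cases "a + b = 0")
  case True
  then have "a = 0" "b = 0"
    using assms by auto
  then show ?thesis
    by simp
next
  case False
  define s where "s = a + b"
  have s: "0 < s"
    using False assms by (simp add: s_def)
  have "(z / s) powr q \<le> z / s" if "0 \<le> z" "z \<le> s" for z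
    using powr_le_one_le[of "z / s" q] that s assms(1)
    by (cases "z = 0") auto
  then have "(a / s) powr q + (b / s) powr q \<le> a / s + b / s"
    using assms by (intro add_mono) (auto simp: s_def)
  also have "\<dots> = 1"
    using s by (simp add: s_def add_divide_distrib[symmetric])
  finally have "s powr q * ((a / s) powr q + (b / s) powr q) \<le> s powr q"
    using s by (simp add: mult_left_le)
  then show ?thesis
    using s assms by (simp add: distrib_left powr_divide s_def)
qed

lemma convex_on_compose_affine:
  fixes f :: "'b::real_vector \<Rightarrow> real" and g :: "'a::real_vector \<Rightarrow> 'b"
  assumes "convex_on T f" "linear g" "convex S" "\<And>x. x \<in> S \<Longrightarrow> g x + b \<in> T"
  shows "convex_on S (\<lambda>x. f (g x + b))"
proof (rule convex_onI)
  fix t :: real and x y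
  assume t: "0 < t" "t < 1" and xy: "x \<in> S" "y \<in> S"
  have "g ((1 - t) *\<^sub>R x + t *\<^sub>R y) + b = (1 - t) *\<^sub>R (g x + b) + t *\<^sub>R (g y + b)"
    by (simp only: linear_add[OF assms(2)] linear_scale[OF assms(2)]) (simp add: algebra_simps)
  then show "f (g ((1 - t) *\<^sub>R x + t *\<^sub>R y) + b) \<le> (1 - t) * f (g x + b) + t * f (g y + b)"
    using convex_onD[OF assms(1), of t "g x + b" "g y + b"] t xy assms(4) by simp
qed (fact assms(3))

lemma convex_on_powr_perspective:
  fixes q :: real
  assumes "1 \<le> q"
  shows "convex_on ({0<..} \<times> {0<..}) (\<lambda>(u, v). u powr q * v powr (1 - q))"
    (is "convex_on _ ?F")
proof (rule convex_onI)
  have persp: "u powr q * v powr (1 - q) = v * (u / v) powr q" if "0 < u" "0 < v" for u v :: real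
    using that by (simp add: powr_divide powr_diff field_simps)
  fix t :: real and z1 z2 :: "real \<times> real"
  assume t: "0 < t" "t < 1" and z: "z1 \<in> {0<..} \<times> {0<..}" "z2 \<in> {0<..} \<times> {0<..}"
  obtain u1 v1 u2 v2 where uv: "z1 = (u1, v1)" "z2 = (u2, v2)"
    and pos: "0 < u1" "0 < v1" "0 < u2" "0 < v2"
    using z by (cases z1, cases z2) auto
  define V where "V = (1 - t) * v1 + t * v2"
  define \<mu> where "\<mu> = t * v2 / V"
  have V: "0 < V"
    using t pos by (simp add: V_def add_pos_pos)
  have weights: "V * (1 - \<mu>) = (1 - t) * v1" "V * \<mu> = t * v2"
    using V by (simp_all add: \<mu>_def V_def field_simps)
  have "0 \<le> V * (1 - \<mu>)" "0 \<le> V * \<mu>"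
    unfolding weights using t pos by simp_all
  then have \<mu>: "0 \<le> \<mu>" "\<mu> \<le> 1"
    using V by (simp_all add: zero_le_mult_iff)
  have "V * ((1 - \<mu>) * (u1 / v1) + \<mu> * (u2 / v2)) = (1 - t) * u1 + t * u2"
    using pos by (simp add: distrib_left weights flip: mult.assoc)
  then have mean: "((1 - t) * u1 + t * u2) / V = (1 - \<mu>) * (u1 / v1) + \<mu> * (u2 / v2)"
    using V by (simp add: field_simps)
  have "((1 - t) * u1 + t * u2) powr q * V powr (1 - q) = V * (((1 - t) * u1 + t * u2) / V) powr q"
    using V t pos by (intro persp) (auto intro: add_pos_pos)
  also have "\<dots> \<le> V * ((1 - \<mu>) * (u1 / v1) powr q + \<mu> * (u2 / v2) powr q)"
    unfolding mean using convex_onD[OF powr_convex[OF assms], of \<mu> "u1 / v1" "u2 / v2"] \<mu> V pos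
    by (intro mult_left_mono) auto
  also have "\<dots> = (1 - t) * (v1 * (u1 / v1) powr q) + t * (v2 * (u2 / v2) powr q)"
    by (simp add: distrib_left weights flip: mult.assoc)
  also have "\<dots> = (1 - t) * (u1 powr q * v1 powr (1 - q)) + t * (u2 powr q * v2 powr (1 - q))"
    using pos by (simp add: persp)
  finally show "?F ((1 - t) *\<^sub>R z1 + t *\<^sub>R z2) \<le> (1 - t) * ?F z1 + t * ?F z2"
    by (simp add: uv V_def)
qed (simp add: convex_Times)

lemma three_powr_lower_bound:
  fixes p :: real
  assumes "0 \<le> p" "p \<le> 1"
  shows "p * (3 powr p + 2) \<le> 3 * (3 powr p - 1)"
proof -
  have "1 \<le> ln (3::real)"
    using exp_le by (subst ln_ge_iff) auto
  then have "exp p \<le> 3 powr p"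
    using assms by (simp add: powr_def mult_le_cancel_left1)
  then have "1 + p + p\<^sup>2 / 2 \<le> 3 powr p"
    using exp_lower_Taylor_quadratic[of p] assms by simp
  then have "(3 - p) * (p + p\<^sup>2 / 2) \<le> (3 - p) * (3 powr p - 1)"
    using assms by (intro mult_left_mono) auto
  moreover have "(3 - p) * (p + p\<^sup>2 / 2) = 3 * p + p\<^sup>2 * (1 - p) / 2"
    by (simp add: power2_eq_square field_simps)
  moreover have "(3 - p) * (3 powr p - 1) = 3 * (3 powr p - 1) - p * (3 powr p + 2) + 3 * p"
    by (simp add: algebra_simps)
  moreover have "0 \<le> p\<^sup>2 * (1 - p) / 2"
    using assms by simp
  ultimately show ?thesis
    by linarith
qed

locale phi_setting =
  fixes n :: nat and p :: real
  assumes n_ge_2: "2 \<le> n" and p_pos: "0 < p" and p_less_1: "p < 1"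
begin

definition m :: real where "m = real n - 1"

definition c :: real where "c = (real n / m) powr p - 1"

definition q :: real where "q = 1 / (1 - p)"

lemma m_ge_1: "1 \<le> m"
  using n_ge_2 by (simp add: m_def)

lemma q_ge_1: "1 \<le> q"
  using p_pos p_less_1 by (simp add: q_def)

lemma p_times_q: "p * q = q - 1"
  using p_less_1 by (simp add: q_def field_simps)

lemma p_le_q_minus_1: "p \<le> q - 1"
  using p_pos p_less_1 by (simp add: q_def field_simps)

lemma c_pos: "0 < c"
proof -
  have "1 < real n / m"
    using m_ge_1 by (simp add: m_def)
  then have "1 powr p < (real n / m) powr p"
    using p_pos by (intro powr_less_mono2) auto
  then show ?thesis
    by (simp add: c_def)
qed

lemma c_le_p_div_m: "c \<le> p / m"
proof -
  have "real n / m = 1 + 1 / m"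
    using m_ge_1 by (simp add: m_def field_simps)
  then have "(real n / m) powr p \<le> 1 + p * (1 / m)"
    using powr_le_one_plus_mult[of p "1 / m"] p_pos p_less_1 m_ge_1 by simp
  then show ?thesis
    by (simp add: c_def)
qed

lemma phi_altdef:
  "phi n p x = c powr q * (real n - x) + (c * (x - 1) + 1) powr q * (real n - x + 2) powr (1 - q)"
proof -
  have "- p / (1 - p) = 1 - q"
    using p_less_1 by (simp add: q_def field_simps)
  moreover have "(real n / m) powr p = c + 1"
    by (simp add: c_def)
  ultimately show ?thesis
    unfolding phi_def m_def[symmetric] q_def[symmetric] by (simp add: algebra_simps)
qed

lemma convex_on_phi: "convex_on {1..real n} (phi n p)"
proof -
  let ?persp = "\<lambda>(u, v). u powr q * v powr (1 - q)"
  have "convex_on {1..real n} (\<lambda>x. ?persp ((c * x, - x) + (1 - c, real n + 2)))"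
  proof (rule convex_on_compose_affine[OF convex_on_powr_perspective[OF q_ge_1]])
    show "linear (\<lambda>x::real. (c * x, - x))"
      by (rule linearI) (simp_all add: algebra_simps)
    show "(c * x, - x) + (1 - c, real n + 2) \<in> {0<..} \<times> {0<..}" if "x \<in> {1..real n}" for x
    proof -
      have "c \<le> c * x"
        using that c_pos mult_left_mono[of 1 x c] by simp
      then show ?thesis
        using that by simp
    qed
  qed simp
  moreover have "?persp ((c * x, - x) + (1 - c, real n + 2))
      = (c * (x - 1) + 1) powr q * (real n - x + 2) powr (1 - q)" for x
    by (simp add: algebra_simps)
  ultimately have persp:
      "convex_on {1..real n} (\<lambda>x. (c * (x - 1) + 1) powr q * (real n - x + 2) powr (1 - q))"
    by simp
  have linear: "convex_on {1..real n} (\<lambda>x. c powr q * (real n - x))"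
    by (intro convex_on_cmul convex_on_diff) (simp_all add: convex_on_const concave_on_ident)
  show ?thesis
    unfolding phi_altdef[abs_def] using convex_on_add[OF linear persp] .
qed

lemma c_powr_q_le: "c powr q \<le> p / m * m powr (1 - q)"
proof -
  have "c powr q \<le> (p / m) powr q"
    using c_pos c_le_p_div_m q_ge_1 by (intro powr_mono2) auto
  also have "\<dots> = p / m * (p powr (q - 1) / m powr (q - 1))"
    using p_pos m_ge_1 powr_add[of "p / m" 1 "q - 1"] by (simp add: powr_divide)
  also have "\<dots> = p / m * (p powr (q - 1) * m powr (1 - q))"
    using powr_minus[of m "q - 1"] by (simp add: divide_inverse)
  also have "\<dots> \<le> p / m * m powr (1 - q)"
    using p_pos p_less_1 m_ge_1 q_ge_1 by (intro mult_left_mono mult_left_le_one_le powr_le1) auto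
  finally show ?thesis .
qed

lemma phi_2_le_1: "phi n p 2 \<le> 1"
proof -
  have "(c + 1) powr q = (m / real n) powr (1 - q)"
    using m_ge_1 p_times_q
    by (simp add: c_def powr_powr powr_divide powr_diff divide_simps)
  then have "(c + 1) powr q * real n powr (1 - q) = m powr (1 - q)"
    using m_ge_1 n_ge_2 by (simp add: powr_divide)
  then have "phi n p 2 = c powr q * (m - 1) + m powr (1 - q)"
    by (simp add: phi_altdef m_def)
  also have "\<dots> \<le> p / m * m powr (1 - q) * (m - 1) + m powr (1 - q)"
    using c_powr_q_le m_ge_1 by (intro add_right_mono mult_right_mono) auto
  also have "\<dots> = m powr (1 - q) * (1 + p * (1 - 1 / m))"
    using m_ge_1 by (simp add: field_simps)
  also have "\<dots> \<le> m powr (1 - q) * (1 + (q - 1) * (1 - 1 / m))"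
    using p_le_q_minus_1 m_ge_1 by (intro mult_left_mono add_left_mono mult_right_mono) auto
  also have "\<dots> \<le> m powr (1 - q) * m powr (q - 1)"
    using one_plus_mult_le_powr[of m "q - 1"] m_ge_1 q_ge_1 by (intro mult_left_mono) auto
  also have "\<dots> = 1"
    using m_ge_1 by (simp flip: powr_add)
  finally show ?thesis .
qed

lemma phi_m_le_1:
  assumes "3 \<le> n"
  shows "phi n p m \<le> 1"
proof (cases "n = 3")
  case True
  have "m = 2"
    unfolding m_def using True by simp
  then show ?thesis
    using phi_2_le_1 by simp
next
  case False
  then have m: "3 \<le> m"
    using assms by (simp add: m_def)
  define W where "W = (3::real) powr p"
  define B where "B = c * (m - 1) + 1"
  have W: "1 \<le> W"
    using p_pos by (simp add: W_def ge_one_powr_ge_zero)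
  have B: "0 < B"
    using c_pos m by (simp add: B_def add_pos_nonneg)
  have "W powr q = 3 powr (q - 1)"
    by (simp add: W_def powr_powr p_times_q)
  then have "(B / W) powr q = B powr q * 3 powr (1 - q)"
    using B W powr_divide[of B W q] powr_minus[of 3 "q - 1"] by (simp add: divide_inverse)
  moreover have "real n - m = 1"
    by (simp add: m_def)
  ultimately have phi_m: "phi n p m = c powr q + (B / W) powr q"
    by (simp add: phi_altdef B_def)
  have "c * (W + m - 1) \<le> p / m * (W + m - 1)"
    using c_le_p_div_m W m by (intro mult_right_mono) auto
  also have "\<dots> = p + p * (W - 1) / m"
    using m by (simp add: field_simps)
  also have "\<dots> \<le> p + p * (W - 1) / 3"
    using m p_pos W by (intro add_left_mono divide_left_mono) auto
  also have "\<dots> \<le> W - 1"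
    using three_powr_lower_bound[of p] p_pos p_less_1 by (simp add: W_def field_simps)
  finally have "c + B / W \<le> 1"
    using W by (simp add: B_def field_simps)
  then have "(c + B / W) powr q \<le> 1"
    using c_pos B W q_ge_1 by (intro powr_le1) auto
  then show ?thesis
    using phi_m powr_add_le_powr_add[OF q_ge_1, of c "B / W"] c_pos B W by simp
qed

end

theorem mainTheorem7:
  fixes n :: nat and p :: real
  assumes "n \<ge> 3" and "0 < p" and "p < 1"
  shows "convex_on {2..real n - 1} (phi n p)
       \<and> (\<forall>x\<in>{2..real n - 1}. phi n p x \<le> 1)"
proof -
  interpret phi_setting n p
    using assms by unfold_locales simp_all
  have convex: "convex_on {2..real n - 1} (phi n p)"
    using convex_on_phi by (rule convex_on_subset) auto
  have "phi n p x \<le> 1" if "x \<in> {2..real n - 1}" for x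
    using convex_on_le_max[OF convex that] phi_2_le_1 phi_m_le_1[OF assms(1)] by (simp add: m_def)
  with convex show ?thesis
    by blast
qed

end
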